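(* The center of the group $QI(\mathbb{R})$ of quasi-isometries of the real line is trivial.
   Context: A map $f:\mathbb{R}\to\mathbb{R}$ is a quasi-isometry if there is $K>1$ such that $\frac{1}{K}|x_1-x_2|-K\le |f(x_1)-f(x_2)|\le K|x_1-x_2|+K$ for all $x_1,x_2\in\mathbb{R}$, and every $y\in\mathbb{R}$ is within distance $K$ of some $f(x)$. Two quasi-isometries $f,g$ are equivalent if $\sup_{x\in\mathbb{R}}|f(x)-g(x)|<\infty$. $QI(\mathbb{R})$ is the set of equivalence classes $[f]$ of quasi-isometries $\mathbb{R}\to\mathbb{R}$, a group under $[f]\cdot[g]=[f\circ g]$. *)

theory Defs
  imports Complex_Main "HOL-Algebra.Group"
begin

definition quasi_isometry :: "(real \<Rightarrow> real) \<Rightarrow> bool" where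
  "quasi_isometry f \<longleftrightarrow> (\<exists>K>1.
      (\<forall>x1 x2. \<bar>x1 - x2\<bar> / K - K \<le> \<bar>f x1 - f x2\<bar> \<and> \<bar>f x1 - f x2\<bar> \<le> K * \<bar>x1 - x2\<bar> + K)
    \<and> (\<forall>y. \<exists>x. \<bar>y - f x\<bar> \<le> K))"

definition qi_equiv :: "(real \<Rightarrow> real) \<Rightarrow> (real \<Rightarrow> real) \<Rightarrow> bool" where
  "qi_equiv f g \<longleftrightarrow> bdd_above (range (\<lambda>x. \<bar>f x - g x\<bar>))"

definition qi_class :: "(real \<Rightarrow> real) \<Rightarrow> (real \<Rightarrow> real) set" where
  "qi_class f = {g. quasi_isometry g \<and> qi_equiv g f}"

text \<open>The group QI(R): classes of quasi-isometries, with [f][g] = [f o g].\<close>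
definition QI_group :: "(real \<Rightarrow> real) set monoid" where
  "QI_group = \<lparr> carrier = {qi_class f | f. quasi_isometry f},
      mult = (\<lambda>A B. {h. quasi_isometry h \<and> (\<exists>f\<in>A. \<exists>g\<in>B. qi_equiv h (f \<circ> g))}),
      one = qi_class id \<rparr>"

definition center :: "('a, 'b) monoid_scheme \<Rightarrow> 'a set" where
  "center G = {z \<in> carrier G. \<forall>x\<in>carrier G. z \<otimes>\<^bsub>G\<^esub> x = x \<otimes>\<^bsub>G\<^esub> z}"

end

theory Submission
  imports Defs "HOL-Analysis.Analysis"
begin

(* If [f] is central, f commutes up to bounded error with g_A x = x + d(x, A) / 2 for every
   A \<subseteq> R. This g_A is a quasi-isometry (a 1/2-Lipschitz perturbation of the identity, onto by
   the intermediate value theorem) fixing A pointwise, so d(f a, A) is bounded for a \<in> A.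
   If f were not at bounded distance from the identity, its linear growth bounds would allow
   choosing points s_0, s_1, ... so sparse that |f s_n - s_m| \<ge> n for all m, and A = {s_n}
   contradicts this. *)

lemma qi_equiv_iff: "qi_equiv f g \<longleftrightarrow> (\<exists>C. \<forall>x. \<bar>f x - g x\<bar> \<le> C)"
  by (auto simp: qi_equiv_def bdd_above_def)

lemma qi_equiv_refl: "qi_equiv f f"
  by (auto simp: qi_equiv_iff)

lemma qi_equiv_sym: "qi_equiv f g \<Longrightarrow> qi_equiv g f"
  by (auto simp: qi_equiv_iff abs_minus_commute)

lemma qi_equiv_trans:
  assumes "qi_equiv f g" "qi_equiv g h"
  shows "qi_equiv f h"
proof -
  obtain C D where C: "\<And>x. \<bar>f x - g x\<bar> \<le> C" and D: "\<And>x. \<bar>g x - h x\<bar> \<le> D"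
    using assms by (auto simp: qi_equiv_iff)
  have "\<bar>f x - h x\<bar> \<le> C + D" for x
    using C[of x] D[of x] by linarith
  then show ?thesis
    by (auto simp: qi_equiv_iff)
qed

lemma quasi_isometryI:
  assumes "K > 1"
    and "\<And>x1 x2. \<bar>x1 - x2\<bar> / K - K \<le> \<bar>f x1 - f x2\<bar>"
    and "\<And>x1 x2. \<bar>f x1 - f x2\<bar> \<le> K * \<bar>x1 - x2\<bar> + K"
    and "\<And>y. \<exists>x. \<bar>y - f x\<bar> \<le> K"
  shows "quasi_isometry f"
  using assms unfolding quasi_isometry_def by blast

lemma quasi_isometry_id: "quasi_isometry id"
proof (rule quasi_isometryI[of 2])
  have "\<bar>t\<bar> / 2 - 2 \<le> \<bar>t\<bar>" for t :: real
    by linarith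
  then show "\<bar>x1 - x2\<bar> / 2 - 2 \<le> \<bar>id x1 - id x2\<bar>" for x1 x2 :: real
    by simp
  show "\<exists>x. \<bar>y - id x\<bar> \<le> 2" for y :: real
    by (rule exI[of _ y]) simp
qed auto

lemma quasi_isometry_comp:
  assumes "quasi_isometry f" "quasi_isometry g"
  shows "quasi_isometry (f \<circ> g)"
proof -
  obtain K where K: "K > 1"
    "\<And>x1 x2. \<bar>x1 - x2\<bar> / K - K \<le> \<bar>f x1 - f x2\<bar>"
    "\<And>x1 x2. \<bar>f x1 - f x2\<bar> \<le> K * \<bar>x1 - x2\<bar> + K"
    "\<And>y. \<exists>x. \<bar>y - f x\<bar> \<le> K"
    using assms(1) unfolding quasi_isometry_def by blast
  obtain L where L: "L > 1"
    "\<And>x1 x2. \<bar>x1 - x2\<bar> / L - L \<le> \<bar>g x1 - g x2\<bar>"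
    "\<And>x1 x2. \<bar>g x1 - g x2\<bar> \<le> L * \<bar>x1 - x2\<bar> + L"
    "\<And>y. \<exists>x. \<bar>y - g x\<bar> \<le> L"
    using assms(2) unfolding quasi_isometry_def by blast
  define M where "M = 2 * K * (L + 1)"
  have "1 < K * L" "L \<le> K * L"
    using K(1) L(1) less_1_mult[of K L] by (auto simp: mult_le_cancel_right1)
  then have KL: "1 < K * L" "K * L \<le> M" "K * L + 2 * K \<le> M" "K + L \<le> M"
    using K(1) by (auto simp: M_def algebra_simps)
  show ?thesis
  proof (rule quasi_isometryI[of M])
    show "M > 1"
      using KL by linarith
  next
    fix x y
    have "\<bar>x - y\<bar> / (K * L) - L / K - K = (\<bar>x - y\<bar> / L - L) / K - K"
      using K(1) L(1) by (simp add: field_simps)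
    also have "\<dots> \<le> \<bar>g x - g y\<bar> / K - K"
      using L(2)[of x y] K(1) by (simp add: divide_right_mono)
    also have "\<dots> \<le> \<bar>f (g x) - f (g y)\<bar>"
      by (rule K(2))
    finally have "\<bar>x - y\<bar> / (K * L) - L / K - K \<le> \<bar>(f \<circ> g) x - (f \<circ> g) y\<bar>"
      by simp
    moreover have "\<bar>x - y\<bar> / M \<le> \<bar>x - y\<bar> / (K * L)"
      using KL by (simp add: frac_le)
    moreover have "L / K \<le> L"
      using K(1) L(1) by (simp add: divide_le_eq)
    ultimately show "\<bar>x - y\<bar> / M - M \<le> \<bar>(f \<circ> g) x - (f \<circ> g) y\<bar>"
      using KL by linarith
  next
    fix x y
    have "\<bar>f (g x) - f (g y)\<bar> \<le> K * \<bar>g x - g y\<bar> + K"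
      by (rule K(3))
    also have "\<dots> \<le> K * (L * \<bar>x - y\<bar> + L) + K"
      using L(3)[of x y] K(1) by simp
    also have "\<dots> = (K * L) * \<bar>x - y\<bar> + (K * L + K)"
      by (simp add: algebra_simps)
    also have "\<dots> \<le> M * \<bar>x - y\<bar> + M"
      using KL K(1) by (intro add_mono mult_right_mono) auto
    finally show "\<bar>(f \<circ> g) x - (f \<circ> g) y\<bar> \<le> M * \<bar>x - y\<bar> + M"
      by simp
  next
    fix z
    obtain y where y: "\<bar>z - f y\<bar> \<le> K"
      using K(4) by blast
    obtain x where x: "\<bar>y - g x\<bar> \<le> L"
      using L(4) by blast
    have "\<bar>f y - f (g x)\<bar> \<le> K * L + K"
      using K(3)[of y "g x"] mult_left_mono[OF x, of K] K(1) by linarith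
    then have "\<bar>z - (f \<circ> g) x\<bar> \<le> M"
      using y KL by simp
    then show "\<exists>x. \<bar>z - (f \<circ> g) x\<bar> \<le> M" ..
  qed
qed

lemma qi_equiv_comp:
  assumes "quasi_isometry f" "qi_equiv f' f" "qi_equiv g' g"
  shows "qi_equiv (f' \<circ> g') (f \<circ> g)"
proof -
  obtain K where K: "K > 1" "\<And>x1 x2. \<bar>f x1 - f x2\<bar> \<le> K * \<bar>x1 - x2\<bar> + K"
    using assms(1) unfolding quasi_isometry_def by blast
  obtain C D where C: "\<And>x. \<bar>f' x - f x\<bar> \<le> C" and D: "\<And>x. \<bar>g' x - g x\<bar> \<le> D"
    using assms(2,3) by (auto simp: qi_equiv_iff)
  have "\<bar>f' (g' x) - f (g x)\<bar> \<le> C + (K * D + K)" for x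
  proof -
    have "\<bar>f (g' x) - f (g x)\<bar> \<le> K * D + K"
      using K(2)[of "g' x" "g x"] mult_left_mono[OF D[of x], of K] K(1) by linarith
    then show ?thesis
      using C[of "g' x"] by linarith
  qed
  then show ?thesis
    by (auto simp: qi_equiv_iff)
qed

lemma qi_class_eq: "qi_equiv f g \<Longrightarrow> qi_class f = qi_class g"
  unfolding qi_class_def using qi_equiv_trans qi_equiv_sym by blast

lemma qi_class_eq_iff:
  assumes "quasi_isometry f"
  shows "qi_class f = qi_class g \<longleftrightarrow> qi_equiv f g"
  using assms qi_class_eq qi_equiv_refl unfolding qi_class_def by blast

lemma carrier_QI_group: "carrier QI_group = {qi_class f | f. quasi_isometry f}"
  by (simp add: QI_group_def)

lemma one_QI_group: "\<one>\<^bsub>QI_group\<^esub> = qi_class id"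
  by (simp add: QI_group_def)

lemma qi_class_mult:
  assumes "quasi_isometry f" "quasi_isometry g"
  shows "qi_class f \<otimes>\<^bsub>QI_group\<^esub> qi_class g = qi_class (f \<circ> g)"
proof -
  have "{h. quasi_isometry h \<and> (\<exists>f'\<in>qi_class f. \<exists>g'\<in>qi_class g. qi_equiv h (f' \<circ> g'))}
      = qi_class (f \<circ> g)"
    using assms qi_equiv_refl qi_equiv_comp[OF assms(1)] qi_equiv_trans
    unfolding qi_class_def by blast
  then show ?thesis
    by (simp add: QI_group_def)
qed

lemma quasi_isometry_add_half_lipschitz:
  fixes \<phi> :: "real \<Rightarrow> real"
  assumes lip: "1-lipschitz_on UNIV \<phi>" and nonneg: "\<And>x. 0 \<le> \<phi> x"
  shows "quasi_isometry (\<lambda>x. x + \<phi> x / 2)"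
proof (rule quasi_isometryI[of 2])
  have lip_abs: "\<bar>\<phi> x - \<phi> y\<bar> \<le> \<bar>x - y\<bar>" for x y
    using lipschitz_onD[OF lip, of x y] by (simp add: dist_real_def)
  have half_perturbation: "\<bar>t\<bar> / 2 - 2 \<le> \<bar>t + d / 2\<bar> \<and> \<bar>t + d / 2\<bar> \<le> 2 * \<bar>t\<bar> + 2"
    if "\<bar>d\<bar> \<le> \<bar>t\<bar>" for t d :: real
    using that by arith
  fix x1 x2
  have eq: "x1 + \<phi> x1 / 2 - (x2 + \<phi> x2 / 2) = (x1 - x2) + (\<phi> x1 - \<phi> x2) / 2"
    by simp
  show "\<bar>x1 - x2\<bar> / 2 - 2 \<le> \<bar>x1 + \<phi> x1 / 2 - (x2 + \<phi> x2 / 2)\<bar>"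
    and "\<bar>x1 + \<phi> x1 / 2 - (x2 + \<phi> x2 / 2)\<bar> \<le> 2 * \<bar>x1 - x2\<bar> + 2"
    unfolding eq using half_perturbation[OF lip_abs[of x1 x2]] by simp_all
next
  fix z
  let ?g = "\<lambda>x. x + \<phi> x / 2"
  have "\<phi> (z - \<phi> z) \<le> \<phi> z + \<phi> z"
    using lipschitz_onD[OF lip, of "z - \<phi> z" z] nonneg[of z] by (simp add: dist_real_def)
  then have "?g (z - \<phi> z) \<le> z" "z \<le> ?g z" "z - \<phi> z \<le> z"
    using nonneg[of z] by simp_all
  moreover have "continuous_on {z - \<phi> z..z} ?g"
    using lipschitz_on_continuous_on[OF lip]
    by (auto intro!: continuous_intros elim: continuous_on_subset)
  ultimately obtain x where "?g x = z"
    using IVT'[of ?g "z - \<phi> z" z z] by auto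
  then show "\<exists>x. \<bar>z - ?g x\<bar> \<le> 2"
    by (intro exI[of _ x]) simp
qed simp

lemma quasi_isometry_add_half_infdist: "quasi_isometry (\<lambda>x. x + infdist x A / 2)"
proof (rule quasi_isometry_add_half_lipschitz)
  show "1-lipschitz_on UNIV (\<lambda>x. infdist x A)"
  proof (rule lipschitz_onI)
    show "dist (infdist x A) (infdist y A) \<le> 1 * dist x y" for x y :: real
      using infdist_triangle_abs[of x A y] by (simp add: dist_real_def)
  qed simp
qed (rule infdist_nonneg)

definition coarsely_central :: "(real \<Rightarrow> real) \<Rightarrow> bool" where
  "coarsely_central f \<longleftrightarrow> (\<forall>g. quasi_isometry g \<longrightarrow> qi_equiv (f \<circ> g) (g \<circ> f))"

lemma qi_class_in_center_iff:
  assumes "quasi_isometry f"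
  shows "qi_class f \<in> center QI_group \<longleftrightarrow> coarsely_central f"
proof -
  have "qi_class f \<otimes>\<^bsub>QI_group\<^esub> qi_class g = qi_class g \<otimes>\<^bsub>QI_group\<^esub> qi_class f
      \<longleftrightarrow> qi_equiv (f \<circ> g) (g \<circ> f)"
    if "quasi_isometry g" for g
    using assms that by (simp add: qi_class_mult qi_class_eq_iff quasi_isometry_comp)
  then show ?thesis
    using assms by (auto simp: center_def carrier_QI_group coarsely_central_def)
qed

lemma coarsely_central_bdd_infdist:
  assumes "coarsely_central f"
  shows "bdd_above ((\<lambda>a. infdist (f a) A) ` A)"
proof -
  let ?g = "\<lambda>x. x + infdist x A / 2"
  obtain C where C: "\<And>x. \<bar>f (?g x) - ?g (f x)\<bar> \<le> C"
    using assms quasi_isometry_add_half_infdist by (force simp: coarsely_central_def qi_equiv_iff)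
  \<comment> \<open>\<open>?g\<close> fixes \<open>A\<close> pointwise, so for \<open>a \<in> A\<close> this bounds \<open>infdist (f a) A / 2\<close>\<close>
  have "infdist (f a) A \<le> 2 * C" if "a \<in> A" for a
    using C[of a] that infdist_nonneg[of "f a" A] by simp
  then show ?thesis
    by (auto simp: bdd_above_def)
qed

lemma quasi_isometry_linear_growth:
  assumes "quasi_isometry f"
  shows "\<exists>K B. 1 \<le> K \<and> 0 \<le> B \<and> (\<forall>x. \<bar>x\<bar> / K - B \<le> \<bar>f x\<bar> \<and> \<bar>f x\<bar> \<le> K * \<bar>x\<bar> + B)"
proof -
  obtain K where K: "K > 1"
    "\<And>x1 x2. \<bar>x1 - x2\<bar> / K - K \<le> \<bar>f x1 - f x2\<bar>" "\<And>x1 x2. \<bar>f x1 - f x2\<bar> \<le> K * \<bar>x1 - x2\<bar> + K"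
    using assms unfolding quasi_isometry_def by blast
  have "\<bar>x\<bar> / K - (K + \<bar>f 0\<bar>) \<le> \<bar>f x\<bar> \<and> \<bar>f x\<bar> \<le> K * \<bar>x\<bar> + (K + \<bar>f 0\<bar>)" for x
    using K(2)[of x 0] K(3)[of x 0] by auto
  with K(1) show ?thesis
    by (intro exI[of _ K] exI[of _ "K + \<bar>f 0\<bar>"]) auto
qed

lemma displacement_unbounded_far_out:
  fixes f :: "real \<Rightarrow> real"
  assumes "\<not> qi_equiv f id" "0 \<le> K" "\<And>x. \<bar>f x\<bar> \<le> K * \<bar>x\<bar> + B"
  shows "\<exists>y. R \<le> \<bar>y\<bar> \<and> c \<le> \<bar>f y - y\<bar>"
proof -
  have "\<forall>C. \<exists>y. C < \<bar>f y - y\<bar>"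
    using assms(1) by (auto simp: qi_equiv_iff not_le)
  then obtain y where y: "max c ((K + 1) * R + B) < \<bar>f y - y\<bar>"
    by blast
  have "\<bar>f y - y\<bar> \<le> (K + 1) * \<bar>y\<bar> + B"
    using assms(3)[of y] by (simp add: algebra_simps)
  then have "(K + 1) * R < (K + 1) * \<bar>y\<bar>"
    using y by linarith
  then have "R \<le> \<bar>y\<bar>"
    using assms(2) by simp
  with y show ?thesis
    by auto
qed

lemma sparse_displaced_sequence:
  assumes "quasi_isometry f" "\<not> qi_equiv f id"
  shows "\<exists>s :: nat \<Rightarrow> real. \<forall>n m. real n \<le> \<bar>f (s n) - s m\<bar>"
proof -
  obtain K B where K: "1 \<le> K" "0 \<le> B"
    and lower: "\<And>x. \<bar>x\<bar> / K - B \<le> \<bar>f x\<bar>" and upper: "\<And>x. \<bar>f x\<bar> \<le> K * \<bar>x\<bar> + B"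
    using quasi_isometry_linear_growth[OF assms(1)] by blast
  \<comment> \<open>growing this fast puts \<open>s m\<close> beyond \<open>f (s n)\<close> for \<open>m > n\<close>, and \<open>f (s n)\<close> beyond \<open>s m\<close> for \<open>m < n\<close>\<close>
  have "\<exists>s. \<forall>n. real n \<le> \<bar>f (s n) - s n\<bar> \<and> K * (\<bar>s n\<bar> + B + real n + 1) \<le> \<bar>s (Suc n)\<bar>"
    using displacement_unbounded_far_out[OF assms(2) _ upper] K
    by (intro dependent_nat_choice[where P = "\<lambda>n x. real n \<le> \<bar>f x - x\<bar>"
          and Q = "\<lambda>n x y. K * (\<bar>x\<bar> + B + real n + 1) \<le> \<bar>y\<bar>"]) auto
  then obtain s where displaced: "\<And>n. real n \<le> \<bar>f (s n) - s n\<bar>"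
    and sparse: "\<And>n. K * (\<bar>s n\<bar> + B + real n + 1) \<le> \<bar>s (Suc n)\<bar>"
    by blast
  have stretch: "t \<le> K * t" if "0 \<le> t" for t
    using mult_right_mono[OF K(1) that] by simp
  have nonneg: "0 \<le> \<bar>x\<bar> + B + real n + 1" "0 \<le> B + real n + 1" for x n
    using K(2) by simp_all
  have mono: "incseq (\<lambda>n. \<bar>s n\<bar>)"
  proof (rule incseq_SucI)
    show "\<bar>s n\<bar> \<le> \<bar>s (Suc n)\<bar>" for n
      using stretch[OF nonneg(1)[of "s n" n]] sparse[of n] K(2) by linarith
  qed
  have "real n \<le> \<bar>f (s n) - s m\<bar>" for n m
  proof -
    consider "m = n" | "n < m" | "m < n"
      by linarith
    then show ?thesis
    proof cases
      case 1
      with displaced show ?thesis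
        by simp
    next
      case 2
      have "K * \<bar>s n\<bar> + B + real n \<le> K * \<bar>s n\<bar> + K * (B + real n + 1)"
        using stretch[OF nonneg(2)[of n]] by simp
      also have "\<dots> = K * (\<bar>s n\<bar> + B + real n + 1)"
        by (simp add: algebra_simps)
      also have "\<dots> \<le> \<bar>s (Suc n)\<bar>"
        by (rule sparse)
      also have "\<dots> \<le> \<bar>s m\<bar>"
        using mono 2 by (simp add: incseq_def)
      finally show ?thesis
        using upper[of "s n"] by linarith
    next
      case 3
      then obtain p where n: "n = Suc p" and "m \<le> p"
        by (cases n) auto
      have "K * (\<bar>s m\<bar> + B + real n) \<le> K * (\<bar>s p\<bar> + B + real p + 1)"
        using mono \<open>m \<le> p\<close> n K by (auto intro!: mult_left_mono simp: incseq_def)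
      also have "\<dots> \<le> \<bar>s n\<bar>"
        using sparse[of p] n by simp
      finally have "\<bar>s m\<bar> + B + real n \<le> \<bar>s n\<bar> / K"
        using K by (simp add: field_simps)
      then show ?thesis
        using lower[of "s n"] by linarith
    qed
  qed
  then show ?thesis
    by blast
qed

lemma qi_equiv_id_if_bdd_infdist:
  assumes "quasi_isometry f" and bdd: "\<And>A. bdd_above ((\<lambda>a. infdist (f a) A) ` A)"
  shows "qi_equiv f id"
proof (rule ccontr)
  assume "\<not> qi_equiv f id"
  then obtain s where far: "\<And>n m. real n \<le> \<bar>f (s n) - s m\<bar>"
    using sparse_displaced_sequence[OF assms(1)] by blast
  have "real n \<le> (INF a\<in>range s. dist (f (s n)) a)" for n
    by (rule cINF_greatest) (auto simp: dist_real_def far)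
  then have unbdd: "real n \<le> infdist (f (s n)) (range s)" for n
    by (simp add: infdist_notempty)
  obtain C where C: "\<And>n. infdist (f (s n)) (range s) \<le> C"
    using bdd[of "range s"] by (auto simp: bdd_above_def)
  obtain n :: nat where "C < real n"
    using reals_Archimedean2 by blast
  with C[of n] unbdd[of n] show False
    by linarith
qed

theorem theorem1:
  shows "center QI_group = {\<one>\<^bsub>QI_group\<^esub>}"
proof -
  have "coarsely_central id"
    by (simp add: coarsely_central_def qi_equiv_refl)
  then have "\<one>\<^bsub>QI_group\<^esub> \<in> center QI_group"
    by (simp add: one_QI_group qi_class_in_center_iff quasi_isometry_id)
  moreover have "z = \<one>\<^bsub>QI_group\<^esub>" if central: "z \<in> center QI_group" for z
  proof -
    obtain f where z: "z = qi_class f" and f: "quasi_isometry f"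
      using central unfolding center_def carrier_QI_group by blast
    with central have "coarsely_central f"
      using qi_class_in_center_iff by blast
    then have "qi_equiv f id"
      by (rule qi_equiv_id_if_bdd_infdist[OF f coarsely_central_bdd_infdist])
    then show ?thesis
      by (simp add: z one_QI_group qi_class_eq)
  qed
  ultimately show ?thesis
    by blast
qed

end
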